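(* Let $\Omega$ be a semigroup and $(\mathcal{A},\{\eta^1,\eta^2,\dots\})$ a $Dend_\infty$-family algebra relative to $\Omega$. Then $(\mathcal{A}\otimes\mathbf{k}\Omega,\{\overline{\eta}^1,\overline{\eta}^2,\dots\})$ is a $Dend_\infty$-algebra, where $\overline{\eta}^k=(\overline{\eta}^{k,[1]},\dots,\overline{\eta}^{k,[k]})$ is defined by $\overline{\eta}^{k,[r]}(a_1\otimes\alpha_1,\dots,a_k\otimes\alpha_k)=\eta^{k,[r]}_{\alpha_1,\dots,\alpha_k}(a_1,\dots,a_k)\otimes\alpha_1\cdots\alpha_k$ (extended multilinearly) for $a_j\in\mathcal{A}$, $\alpha_j\in\Omega$, $[r]\in C_k$.
   Context: $\mathbf{k}$ is a commutative unital ring of characteristic $0$; $\Omega$ a semigroup; $\mathbf{k}\Omega$ the free $\mathbf{k}$-module on $\Omega$; $\mathcal{A}=\oplus_{i\in\mathbb{Z}}\mathcal{A}^i$ a graded $\mathbf{k}$-module and $\mathcal{A}\otimes\mathbf{k}\Omega$ is graded by $(\mathcal{A}\otimes\mathbf{k}\Omega)^i=\mathcal{A}^i\otimes\mathbf{k}\Omega$. $C_k=\{[1],\dots,[k]\}$ are formal symbols. For $m,n\ge1$, $1\le i\le m$, $1\le r\le m+n-1$ define $R_0[r]:=R_0(m;1,\dots,n,\dots,1)[r]$ to be $[r]$ if $r\le i-1$, $[i]$ if $i\le r\le i+n-1$, $[r-n+1]$ if $r\ge i+n$; and $R_i[r]:=R_i(m;1,\dots,n,\dots,1)[r]$ to be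 $[r-i+1]$ if $i\le r\le i+n-1$ and the formal sum $[1]+\cdots+[n]$ otherwise; for a tuple $\eta^n$ one sets $\eta^{n,[1]+\cdots+[n]}=\eta^{n,[1]}+\cdots+\eta^{n,[n]}$. Sign: $\pm:=(-1)^{i(n+1)+n(|a_1|+\cdots+|a_{i-1}|)}$. A $Dend_\infty$-family algebra is a graded $\mathcal{A}$ with, for each $k\ge1$, a $k$-tuple $\eta^k=(\eta^{k,[1]},\dots,\eta^{k,[k]})$ where each $\eta^{k,[r]}$ is a collection $\{\eta^{k,[r]}_{\alpha_1,\dots,\alpha_k}:\mathcal{A}^{\otimes k}\to\mathcal{A}\}_{\alpha_1,\dots,\alpha_k\in\Omega}$ of multilinear maps of degree $k-2$ such that $\eta^{k,[r]}_{\alpha_1,\dots,\alpha_k}$ does not depend on $\alpha_r$, satisfying for all $N\ge1$, $[r]\in C_N$, homogeneous $a_1,\dots,a_N$ and $\alpha_1,\dots,\alpha_N\in\Omega$: $\sum_{m+n=N+1}\sum_{i=1}^m\pm\,\eta^{m,R_0[r]}_{\alpha_1,\dots,\alpha_{i-1},\alpha_i\cdots\alpha_{i+n-1},\alpha_{i+n},\dots,\alpha_N}\big(a_1,\dots,a_{i-1},\eta^{n,R_i[r]}_{\alpha_i,\dots,\alpha_{i+n-1}}(a_i,\dots,a_{i+n-1}),a_{i+n},\dots,a_N\big)=0$. A $Dend_\infty$-algebra is the same notion with $\Omega$ a singleton (no labels, no independence condition): a graded module $\mathcal{B}$ with $k$-tuples $(\eta^{k,[1]},\dots,\eta^{k,[k]})$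 of multilinear maps $\mathcal{B}^{\otimes k}\to\mathcal{B}$ of degree $k-2$ satisfying $\sum_{m+n=N+1}\sum_{i=1}^m\pm\,\eta^{m,R_0[r]}(b_1,\dots,\eta^{n,R_i[r]}(b_i,\dots,b_{i+n-1}),\dots,b_N)=0$ for all $N$, $[r]\in C_N$. *)

theory Defs
  imports Complex_Main "HOL-Library.Poly_Mapping"
begin

fun sprod :: "'w::semigroup_mult list \<Rightarrow> 'w" where
  "sprod [] = undefined"
| "sprod [x] = x"
| "sprod (x # y # xs) = x * sprod (y # xs)"

definition multilinear :: "('k::comm_ring_1 \<Rightarrow> 'a::ab_group_add \<Rightarrow> 'a)
    \<Rightarrow> ('k \<Rightarrow> 'b::ab_group_add \<Rightarrow> 'b) \<Rightarrow> nat \<Rightarrow> ('a list \<Rightarrow> 'b) \<Rightarrow> bool" where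
  "multilinear scA scB n f \<longleftrightarrow>
     (\<forall>xs j x y c. length xs = n \<and> j < n \<longrightarrow>
        f (xs[j := x + y]) = f (xs[j := x]) + f (xs[j := y]) \<and>
        f (xs[j := scA c x]) = scB c (f (xs[j := x])))"

definition graded_module :: "('k::comm_ring_1 \<Rightarrow> 'a::ab_group_add \<Rightarrow> 'a) \<Rightarrow> (int \<Rightarrow> 'a set) \<Rightarrow> bool" where
  "graded_module sc G \<longleftrightarrow> module sc \<and> (\<forall>d. 0 \<in> G d \<and> (\<forall>x\<in>G d. \<forall>y\<in>G d. x + y \<in> G d) \<and> (\<forall>c. \<forall>x\<in>G d. sc c x \<in> G d)) \<and>
     (\<forall>x. \<exists>!c :: int \<Rightarrow>\<^sub>0 'a. (\<forall>d. Poly_Mapping.lookup c d \<in> G d) \<and> x = (\<Sum>d\<in>Poly_Mapping.keys c. Poly_Mapping.lookup c d))"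

(* R_0(m;1,..,n,..,1)[r] (a single index) and R_i(m;1,..,n,..,1)[r]
   (a single index or the formal sum [1]+...+[n], represented as the set of summands) *)
definition R0 :: "nat \<Rightarrow> nat \<Rightarrow> nat \<Rightarrow> nat \<Rightarrow> nat" where
  "R0 m n i r = (if r \<le> i - 1 then r else if r \<le> i + n - 1 then i else r - n + 1)"

definition Ri :: "nat \<Rightarrow> nat \<Rightarrow> nat \<Rightarrow> nat \<Rightarrow> nat set" where
  "Ri m n i r = (if i \<le> r \<and> r \<le> i + n - 1 then {r - i + 1} else {1..n})"

definition sgnapp :: "nat \<Rightarrow> nat \<Rightarrow> int list \<Rightarrow> 'a::ab_group_add \<Rightarrow> 'a" where
  "sgnapp i n ds x = (if even (int i * (int n + 1) + int n * sum_list (take (i - 1) ds)) then x else - x)"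

(* eta k r alphas as  =  eta^{k,[r]}_{alpha_1..alpha_k}(a_1..a_k)   (1 <= r <= k) *)
definition dend_family_algebra ::
  "('k::comm_ring_1 \<Rightarrow> 'a::ab_group_add \<Rightarrow> 'a) \<Rightarrow> (int \<Rightarrow> 'a set)
     \<Rightarrow> (nat \<Rightarrow> nat \<Rightarrow> 'w::semigroup_mult list \<Rightarrow> 'a list \<Rightarrow> 'a) \<Rightarrow> bool" where
  "dend_family_algebra sc G eta \<longleftrightarrow>
     graded_module sc G \<and>
     (\<forall>k r als. 1 \<le> r \<and> r \<le> k \<and> length als = k \<longrightarrow> multilinear sc sc k (eta k r als)) \<and>
     (\<forall>k r als xs ds. 1 \<le> r \<and> r \<le> k \<and> length als = k \<and> length xs = k \<and> length ds = k \<and>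
        (\<forall>j<k. xs ! j \<in> G (ds ! j)) \<longrightarrow> eta k r als xs \<in> G (sum_list ds + int k - 2)) \<and>
     (\<forall>k r als b xs. 1 \<le> r \<and> r \<le> k \<and> length als = k \<and> length xs = k \<longrightarrow>
        eta k r (als[r - 1 := b]) xs = eta k r als xs) \<and>
     (\<forall>N r als xs ds. 1 \<le> N \<and> 1 \<le> r \<and> r \<le> N \<and> length als = N \<and> length xs = N \<and> length ds = N \<and>
        (\<forall>j<N. xs ! j \<in> G (ds ! j)) \<longrightarrow>
        (\<Sum>n\<in>{1..N}. \<Sum>i\<in>{1..N + 1 - n}.
           sgnapp i n ds
             (eta (N + 1 - n) (R0 (N + 1 - n) n i r)
                (take (i - 1) als @ [sprod (take n (drop (i - 1) als))] @ drop (i - 1 + n) als)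
                (take (i - 1) xs @
                   [(\<Sum>s\<in>Ri (N + 1 - n) n i r. eta n s (take n (drop (i - 1) als)) (take n (drop (i - 1) xs)))]
                   @ drop (i - 1 + n) xs))) = 0)"

(* eta k r bs  =  eta^{k,[r]}(b_1..b_k)   (1 <= r <= k) *)
definition dend_algebra ::
  "('k::comm_ring_1 \<Rightarrow> 'b::ab_group_add \<Rightarrow> 'b) \<Rightarrow> (int \<Rightarrow> 'b set)
     \<Rightarrow> (nat \<Rightarrow> nat \<Rightarrow> 'b list \<Rightarrow> 'b) \<Rightarrow> bool" where
  "dend_algebra sc G eta \<longleftrightarrow>
     graded_module sc G \<and>
     (\<forall>k r. 1 \<le> r \<and> r \<le> k \<longrightarrow> multilinear sc sc k (eta k r)) \<and>
     (\<forall>k r bs ds. 1 \<le> r \<and> r \<le> k \<and> length bs = k \<and> length ds = k \<and>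
        (\<forall>j<k. bs ! j \<in> G (ds ! j)) \<longrightarrow> eta k r bs \<in> G (sum_list ds + int k - 2)) \<and>
     (\<forall>N r bs ds. 1 \<le> N \<and> 1 \<le> r \<and> r \<le> N \<and> length bs = N \<and> length ds = N \<and>
        (\<forall>j<N. bs ! j \<in> G (ds ! j)) \<longrightarrow>
        (\<Sum>n\<in>{1..N}. \<Sum>i\<in>{1..N + 1 - n}.
           sgnapp i n ds
             (eta (N + 1 - n) (R0 (N + 1 - n) n i r)
                (take (i - 1) bs @
                   [(\<Sum>s\<in>Ri (N + 1 - n) n i r. eta n s (take n (drop (i - 1) bs)))]
                   @ drop (i - 1 + n) bs))) = 0)"

(* A \<otimes> k\<Omega> realised as (+)_{alpha in Omega} A, i.e. finitely supported maps Omega \<Rightarrow> A;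
   a \<otimes> alpha corresponds to  Poly_Mapping.single alpha a. *)
definition tensor_scale :: "('k \<Rightarrow> 'a::ab_group_add \<Rightarrow> 'a) \<Rightarrow> 'k \<Rightarrow> ('w \<Rightarrow>\<^sub>0 'a) \<Rightarrow> ('w \<Rightarrow>\<^sub>0 'a)" where
  "tensor_scale sc c f = Poly_Mapping.map (sc c) f"

definition tensor_grading :: "(int \<Rightarrow> 'a::zero set) \<Rightarrow> int \<Rightarrow> ('w \<Rightarrow>\<^sub>0 'a) set" where
  "tensor_grading G d = {f. \<forall>w. Poly_Mapping.lookup f w \<in> G d}"

definition tensor_ops :: "(nat \<Rightarrow> nat \<Rightarrow> 'w::semigroup_mult list \<Rightarrow> 'a::ab_group_add list \<Rightarrow> 'a)
    \<Rightarrow> nat \<Rightarrow> nat \<Rightarrow> ('w \<Rightarrow>\<^sub>0 'a) list \<Rightarrow> ('w \<Rightarrow>\<^sub>0 'a)" where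
  "tensor_ops eta k r fs =
     (\<Sum>als\<in>listset (List.map Poly_Mapping.keys fs).
        Poly_Mapping.single (sprod als) (eta k r als (List.map2 Poly_Mapping.lookup fs als)))"

end

theory Submission
  imports Defs
begin

(* Write elements of A \<otimes> k\<Omega> as finitely supported maps \<Omega> \<Rightarrow> A. By multilinearity, an operation
   of the tensor product applied to such maps is a sum over the label tuples (\<alpha>1, ..., \<alpha>k) drawn
   from the supports of its arguments, the term of a tuple being the family operation with these
   labels, placed at \<alpha>1 ... \<alpha>k. The same holds for the composites in the Dend-infinity
   identities, because associativity of \<Omega> absorbs the product of the inner labels into the outer
   one. The identity for A \<otimes> k\<Omega> thus becomes a sum of monomials whose coefficients are instances
   of the family identity, and these vanish. *)

lemma listset_eq_list_all2: "listset As = {xs. list_all2 (\<in>) xs As}"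
  by (induction As) (auto simp: set_Cons_def list_all2_Cons2)

lemma length_listset: "xs \<in> listset As \<Longrightarrow> length xs = length As"
  by (simp add: listset_eq_list_all2 list_all2_lengthD)

lemma finite_listset:
  assumes "\<forall>A\<in>set As. finite A"
  shows "finite (listset As)"
proof (rule finite_subset)
  show "listset As \<subseteq> {xs. set xs \<subseteq> \<Union>(set As) \<and> length xs = length As}"
  proof
    fix xs assume "xs \<in> listset As"
    then have "length xs = length As" "\<forall>i<length As. xs ! i \<in> As ! i"
      by (simp_all add: listset_eq_list_all2 list_all2_conv_all_nth)
    then show "xs \<in> {xs. set xs \<subseteq> \<Union>(set As) \<and> length xs = length As}"
      by (auto simp: in_set_conv_nth) (metis nth_mem)
  qed
  show "finite {xs. set xs \<subseteq> \<Union>(set As) \<and> length xs = length As}"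
    using assms by (intro finite_lists_length_eq) auto
qed

lemma listset_mono: "list_all2 (\<subseteq>) As Bs \<Longrightarrow> listset As \<subseteq> listset Bs"
  by (auto simp: listset_eq_list_all2 list_all2_conv_all_nth) blast

lemma listset_append: "listset (As @ Bs) = (\<lambda>(xs, ys). xs @ ys) ` (listset As \<times> listset Bs)"
proof (intro set_eqI iffI)
  fix zs assume "zs \<in> listset (As @ Bs)"
  then obtain xs ys where "zs = xs @ ys" "xs \<in> listset As" "ys \<in> listset Bs"
    by (auto simp: listset_eq_list_all2 list_all2_append2)
  then show "zs \<in> (\<lambda>(xs, ys). xs @ ys) ` (listset As \<times> listset Bs)"
    by force
qed (auto simp: listset_eq_list_all2 intro: list_all2_appendI)

lemma sum_listset_append:
  "(\<Sum>zs\<in>listset (As @ Bs). f zs) = (\<Sum>xs\<in>listset As. \<Sum>ys\<in>listset Bs. f (xs @ ys))"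
proof -
  have "inj_on (\<lambda>(xs, ys). xs @ ys) (listset As \<times> listset Bs)"
    by (auto simp: inj_on_def length_listset)
  then show ?thesis
    unfolding listset_append by (simp add: sum.reindex sum.cartesian_product split_def)
qed

lemma sum_listset_singleton: "(\<Sum>xs\<in>listset [A]. f xs) = (\<Sum>a\<in>A. f [a])"
  by (simp add: sum.reindex inj_on_def)

lemma multilinear_add:
  "multilinear sA sB n f \<Longrightarrow> length xs = n \<Longrightarrow> j < n \<Longrightarrow>
    f (xs[j := x + y]) = f (xs[j := x]) + f (xs[j := y])"
  unfolding multilinear_def by blast

lemma multilinear_scale:
  "multilinear sA sB n f \<Longrightarrow> length xs = n \<Longrightarrow> j < n \<Longrightarrow>
    f (xs[j := sA c x]) = sB c (f (xs[j := x]))"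
  unfolding multilinear_def by blast

lemma multilinear_zero:
  assumes "multilinear sA sB n f" "length xs = n" "j < n"
  shows "f (xs[j := 0]) = 0"
  using multilinear_add[OF assms, of 0 0] by simp

lemma multilinear_eq_zero:
  "multilinear sA sB n f \<Longrightarrow> length xs = n \<Longrightarrow> j < n \<Longrightarrow> xs ! j = 0 \<Longrightarrow> f xs = 0"
  using multilinear_zero by (metis list_update_id)

lemma multilinear_sum:
  assumes "multilinear sA sB n f" "length xs = n" "j < n"
  shows "f (xs[j := sum g I]) = (\<Sum>i\<in>I. f (xs[j := g i]))"
  by (induction I rule: infinite_finite_induct)
    (simp_all add: multilinear_zero[OF assms] multilinear_add[OF assms])

lemma sprod_Cons: "xs \<noteq> [] \<Longrightarrow> sprod (x # xs) = x * sprod xs"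
  by (cases xs) simp_all

lemma sprod_append: "xs \<noteq> [] \<Longrightarrow> ys \<noteq> [] \<Longrightarrow> sprod (xs @ ys) = sprod xs * sprod ys"
  by (induction xs rule: sprod.induct) (simp_all add: sprod_Cons mult.assoc)

lemma sprod_append_sprod: "ys \<noteq> [] \<Longrightarrow> sprod (xs @ sprod ys # zs) = sprod (xs @ ys @ zs)"
  by (cases "xs = []"; cases "zs = []") (simp_all add: sprod_append sprod_Cons mult.assoc)

lemma single_sum:
  "Poly_Mapping.single k (sum f A) = (\<Sum>x\<in>A. Poly_Mapping.single k (f x))"
  by (induction A rule: infinite_finite_induct) (simp_all add: single_add)

lemma lookup_map:
  "g 0 = 0 \<Longrightarrow> Poly_Mapping.lookup (Poly_Mapping.map g p) k = g (Poly_Mapping.lookup p k)"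
  by (simp add: Poly_Mapping.map.rep_eq when_def)

lemma map2_list_update:
  "length xs = length ys \<Longrightarrow> j < length xs \<Longrightarrow>
    map2 f (xs[j := v]) ys = (map2 f xs ys)[j := f v (ys ! j)]"
  by (rule nth_equalityI) (auto simp: nth_list_update)

lemma sgnapp_sum_single:
  "sgnapp i n ds (\<Sum>x\<in>A. Poly_Mapping.single (h x) (f x)) =
    (\<Sum>x\<in>A. Poly_Mapping.single (h x) (sgnapp i n ds (f x)))"
  by (auto simp: sgnapp_def sum_negf single_uminus)

lemma lookup_tensor_scale:
  "module sc \<Longrightarrow> Poly_Mapping.lookup (tensor_scale sc c f) w = sc c (Poly_Mapping.lookup f w)"
  by (simp add: tensor_scale_def lookup_map module.scale_zero_right)

lemma tensor_scale_single:
  "module sc \<Longrightarrow> tensor_scale sc c (Poly_Mapping.single w a) = Poly_Mapping.single w (sc c a)"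
  by (simp add: tensor_scale_def module.scale_zero_right)

lemma keys_tensor_scale:
  "module sc \<Longrightarrow> Poly_Mapping.keys (tensor_scale sc c f) \<subseteq> Poly_Mapping.keys f"
  by (auto simp: in_keys_iff lookup_tensor_scale module.scale_zero_right)

lemma module_tensor_scale:
  fixes sc :: "'k::comm_ring_1 \<Rightarrow> 'a::ab_group_add \<Rightarrow> 'a"
  assumes "module sc"
  shows "module (tensor_scale sc :: 'k \<Rightarrow> ('w \<Rightarrow>\<^sub>0 'a) \<Rightarrow> 'w \<Rightarrow>\<^sub>0 'a)"
  by unfold_locales
    (simp_all add: poly_mapping_eq_iff fun_eq_iff lookup_tensor_scale[OF assms] lookup_add
      module.scale_right_distrib[OF assms] module.scale_left_distrib[OF assms]
      module.scale_scale[OF assms] module.scale_one[OF assms])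

lemma lookup_tensor_ops:
  "Poly_Mapping.lookup (tensor_ops eta k r fs) w =
    (\<Sum>als\<in>listset (map Poly_Mapping.keys fs).
       if sprod als = w then eta k r als (map2 Poly_Mapping.lookup fs als) else 0)"
  by (simp add: tensor_ops_def lookup_sum lookup_single when_def)

lemma tensor_ops_eq_sum_listset:
  assumes ml: "\<And>als. length als = k \<Longrightarrow> multilinear sA sB k (eta k r als)"
    and len: "length fs = k"
    and keys: "list_all2 (\<lambda>f S. Poly_Mapping.keys f \<subseteq> S) fs Ss"
    and fin: "\<forall>S\<in>set Ss. finite S"
  shows "tensor_ops eta k r fs =
    (\<Sum>als\<in>listset Ss.
       Poly_Mapping.single (sprod als) (eta k r als (map2 Poly_Mapping.lookup fs als)))"
  unfolding tensor_ops_def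
proof (rule sum.mono_neutral_left)
  show "finite (listset Ss)"
    using fin by (rule finite_listset)
  show "listset (map Poly_Mapping.keys fs) \<subseteq> listset Ss"
    using keys by (intro listset_mono) (simp add: list_all2_map1)
  show "\<forall>als\<in>listset Ss - listset (map Poly_Mapping.keys fs).
      Poly_Mapping.single (sprod als) (eta k r als (map2 Poly_Mapping.lookup fs als)) = 0"
  proof
    fix als assume als: "als \<in> listset Ss - listset (map Poly_Mapping.keys fs)"
    then have la: "length als = k"
      using len keys by (auto simp: length_listset dest: list_all2_lengthD)
    then obtain j where "j < k" "als ! j \<notin> Poly_Mapping.keys (fs ! j)"
      using als len by (auto simp: listset_eq_list_all2 list_all2_conv_all_nth)
    then have "eta k r als (map2 Poly_Mapping.lookup fs als) = 0"
      using la len by (intro multilinear_eq_zero[OF ml[OF la], of _ j]) (auto simp: in_keys_iff)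
    then show "Poly_Mapping.single (sprod als) (eta k r als (map2 Poly_Mapping.lookup fs als)) = 0"
      by simp
  qed
qed

lemma tensor_ops_list_update:
  assumes ml: "\<And>als. length als = k \<Longrightarrow> multilinear sA sB k (eta k r als)"
    and len: "length fs = k" and j: "j < k"
    and v: "Poly_Mapping.keys v \<subseteq> S" and fin: "finite S"
  shows "tensor_ops eta k r (fs[j := v]) =
    (\<Sum>als\<in>listset ((map Poly_Mapping.keys fs)[j := S]). Poly_Mapping.single (sprod als)
       (eta k r als ((map2 Poly_Mapping.lookup fs als)[j := Poly_Mapping.lookup v (als ! j)])))"
proof -
  have "\<forall>S'\<in>set ((map Poly_Mapping.keys fs)[j := S]). finite S'"
    using fin set_update_subset_insert by fastforce
  then have "tensor_ops eta k r (fs[j := v]) =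
      (\<Sum>als\<in>listset ((map Poly_Mapping.keys fs)[j := S]).
        Poly_Mapping.single (sprod als) (eta k r als (map2 Poly_Mapping.lookup (fs[j := v]) als)))"
    using len j v by (intro tensor_ops_eq_sum_listset[where eta=eta, OF ml])
      (auto simp: list_all2_conv_all_nth nth_list_update)
  also have "\<dots> = (\<Sum>als\<in>listset ((map Poly_Mapping.keys fs)[j := S]).
      Poly_Mapping.single (sprod als)
        (eta k r als ((map2 Poly_Mapping.lookup fs als)[j := Poly_Mapping.lookup v (als ! j)])))"
    using len j by (intro sum.cong refl) (simp add: map2_list_update length_listset)
  finally show ?thesis .
qed

lemma multilinear_tensor_ops:
  fixes sc :: "'k::comm_ring_1 \<Rightarrow> 'a::ab_group_add \<Rightarrow> 'a"
    and eta :: "nat \<Rightarrow> nat \<Rightarrow> 'w::semigroup_mult list \<Rightarrow> 'a list \<Rightarrow> 'a"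
  assumes M: "module sc"
    and ml: "\<And>als. length als = k \<Longrightarrow> multilinear sc sc k (eta k r als)"
  shows "multilinear (tensor_scale sc) (tensor_scale sc) k (tensor_ops eta k r)"
  unfolding multilinear_def
proof (intro allI impI conjI)
  fix fs :: "('w \<Rightarrow>\<^sub>0 'a) list" and j and x y :: "'w \<Rightarrow>\<^sub>0 'a" and c :: 'k
  assume "length fs = k \<and> j < k"
  then have len: "length fs = k" and j: "j < k" by simp_all
  define S where "S = Poly_Mapping.keys x \<union> Poly_Mapping.keys y"
  define L where "L = listset ((map Poly_Mapping.keys fs)[j := S])"
  have expand: "tensor_ops eta k r (fs[j := v]) = (\<Sum>als\<in>L. Poly_Mapping.single (sprod als)
      (eta k r als ((map2 Poly_Mapping.lookup fs als)[j := Poly_Mapping.lookup v (als ! j)])))"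
    if "Poly_Mapping.keys v \<subseteq> S" for v
    unfolding L_def using ml len j that by (rule tensor_ops_list_update) (simp_all add: S_def)
  have ml': "multilinear sc sc k (eta k r als)" "length (map2 Poly_Mapping.lookup fs als) = k"
    if "als \<in> L" for als
    using that len by (simp_all add: L_def ml length_listset)
  have keys: "Poly_Mapping.keys x \<subseteq> S" "Poly_Mapping.keys y \<subseteq> S"
    by (simp_all add: S_def)
  have keys_add: "Poly_Mapping.keys (x + y) \<subseteq> S"
    unfolding S_def by (rule keys_add)
  show "tensor_ops eta k r (fs[j := x + y]) =
      tensor_ops eta k r (fs[j := x]) + tensor_ops eta k r (fs[j := y])"
    unfolding expand[OF keys_add] expand[OF keys(1)] expand[OF keys(2)]
      sum.distrib[symmetric] single_add[symmetric]
    using j by (intro sum.cong refl) (simp add: lookup_add multilinear_add[OF ml'])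
  have keys_scale: "Poly_Mapping.keys (tensor_scale sc c x) \<subseteq> S"
    using keys_tensor_scale[OF M] keys(1) by (rule order.trans)
  show "tensor_ops eta k r (fs[j := tensor_scale sc c x]) =
      tensor_scale sc c (tensor_ops eta k r (fs[j := x]))"
    unfolding expand[OF keys_scale] expand[OF keys(1)]
      module.scale_sum_right[OF module_tensor_scale[OF M]] tensor_scale_single[OF M]
    using j by (intro sum.cong refl) (simp add: lookup_tensor_scale[OF M] multilinear_scale[OF ml'])
qed

lemma tensor_ops_single_slot:
  assumes ml: "\<And>als. length als = k \<Longrightarrow> multilinear sA sB k (eta k r als)"
    and k: "k = length pre + 1 + length suf"
  shows "tensor_ops eta k r (pre @ Poly_Mapping.single g y # suf) =
    (\<Sum>a\<in>listset (map Poly_Mapping.keys pre). \<Sum>c\<in>listset (map Poly_Mapping.keys suf).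
       Poly_Mapping.single (sprod (a @ g # c))
         (eta k r (a @ g # c) (map2 Poly_Mapping.lookup pre a @ y # map2 Poly_Mapping.lookup suf c)))"
proof -
  have "tensor_ops eta k r (pre @ Poly_Mapping.single g y # suf) =
      (\<Sum>als\<in>listset (map Poly_Mapping.keys pre @ [{g}] @ map Poly_Mapping.keys suf).
         Poly_Mapping.single (sprod als)
           (eta k r als (map2 Poly_Mapping.lookup (pre @ Poly_Mapping.single g y # suf) als)))"
    using k by (intro tensor_ops_eq_sum_listset[where eta=eta, OF ml])
      (auto intro!: list_all2_appendI simp: list_all2_map2 list_all2_refl split: if_splits)
  also have "\<dots> = (\<Sum>a\<in>listset (map Poly_Mapping.keys pre).
      \<Sum>c\<in>listset (map Poly_Mapping.keys suf).
       Poly_Mapping.single (sprod (a @ g # c))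
         (eta k r (a @ g # c) (map2 Poly_Mapping.lookup pre a @ y # map2 Poly_Mapping.lookup suf c)))"
    unfolding sum_listset_append sum_listset_singleton
    by (intro sum.cong refl) (simp add: length_listset)
  finally show ?thesis .
qed

lemma tensor_ops_nested:
  assumes M: "module sc"
    and ml: "\<And>als. length als = k \<Longrightarrow> multilinear sc sc k (eta k r als)"
    and k: "k = length pre + 1 + length suf" and mid: "mid \<noteq> []"
  shows "tensor_ops eta k r (pre @ (\<Sum>s\<in>S. tensor_ops eta n s mid) # suf) =
    (\<Sum>b\<in>listset (map Poly_Mapping.keys mid).
     \<Sum>a\<in>listset (map Poly_Mapping.keys pre). \<Sum>c\<in>listset (map Poly_Mapping.keys suf).
       Poly_Mapping.single (sprod (a @ b @ c))
         (eta k r (a @ sprod b # c) (map2 Poly_Mapping.lookup pre a @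
            (\<Sum>s\<in>S. eta n s b (map2 Poly_Mapping.lookup mid b)) # map2 Poly_Mapping.lookup suf c)))"
proof -
  have mlT: "multilinear (tensor_scale sc) (tensor_scale sc) k (tensor_ops eta k r)"
    using M ml by (rule multilinear_tensor_ops)
  define B where "B = listset (map Poly_Mapping.keys mid)"
  define Y where "Y b = (\<Sum>s\<in>S. eta n s b (map2 Poly_Mapping.lookup mid b))" for b
  have "(\<Sum>s\<in>S. tensor_ops eta n s mid) = (\<Sum>b\<in>B. Poly_Mapping.single (sprod b) (Y b))"
    unfolding tensor_ops_def single_sum B_def Y_def by (rule sum.swap)
  moreover have "tensor_ops eta k r
      ((pre @ 0 # suf)[length pre := \<Sum>b\<in>B. Poly_Mapping.single (sprod b) (Y b)]) =
    (\<Sum>b\<in>B. tensor_ops eta k r ((pre @ 0 # suf)[length pre := Poly_Mapping.single (sprod b) (Y b)]))"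
    using k by (intro multilinear_sum[OF mlT]) simp_all
  ultimately have "tensor_ops eta k r (pre @ (\<Sum>s\<in>S. tensor_ops eta n s mid) # suf) =
      (\<Sum>b\<in>B. tensor_ops eta k r (pre @ Poly_Mapping.single (sprod b) (Y b) # suf))"
    by (simp add: list_update_append)
  also have "\<dots> = (\<Sum>b\<in>B. \<Sum>a\<in>listset (map Poly_Mapping.keys pre).
      \<Sum>c\<in>listset (map Poly_Mapping.keys suf).
       Poly_Mapping.single (sprod (a @ b @ c))
         (eta k r (a @ sprod b # c) (map2 Poly_Mapping.lookup pre a @ Y b # map2 Poly_Mapping.lookup suf c)))"
  proof -
    have "b \<noteq> []" if "b \<in> B" for b
      using that mid by (auto simp: B_def dest: length_listset)
    then show ?thesis
      by (intro sum.cong refl) (simp add: tensor_ops_single_slot[where eta=eta, OF ml k] sprod_append_sprod)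
  qed
  finally show ?thesis
    unfolding B_def Y_def .
qed

lemma graded_module_sum_mem:
  assumes "graded_module sc G" and "\<And>a. a \<in> A \<Longrightarrow> f a \<in> G d"
  shows "sum f A \<in> G d"
proof -
  have "0 \<in> G d" "\<And>x y. x \<in> G d \<Longrightarrow> y \<in> G d \<Longrightarrow> x + y \<in> G d"
    using assms(1) by (simp_all add: graded_module_def)
  then show ?thesis
    using assms(2) by (induction A rule: infinite_finite_induct) simp_all
qed

lemma tensor_ops_mem_tensor_grading:
  assumes G: "graded_module sc G"
    and eta: "\<And>als xs. length als = k \<Longrightarrow> length xs = k \<Longrightarrow> \<forall>j<k. xs ! j \<in> G (ds ! j) \<Longrightarrow>
      eta k r als xs \<in> G e"
    and len: "length fs = k" and fs: "\<forall>j<k. fs ! j \<in> tensor_grading G (ds ! j)"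
  shows "tensor_ops eta k r fs \<in> tensor_grading G e"
  unfolding tensor_grading_def mem_Collect_eq lookup_tensor_ops
proof (intro allI graded_module_sum_mem[OF G])
  fix w als assume "als \<in> listset (map Poly_Mapping.keys fs)"
  then have "eta k r als (map2 Poly_Mapping.lookup fs als) \<in> G e"
    using len fs by (intro eta) (auto simp: tensor_grading_def length_listset)
  then show "(if sprod als = w then eta k r als (map2 Poly_Mapping.lookup fs als) else 0) \<in> G e"
    using G by (simp add: graded_module_def)
qed

definition graded_components :: "(int \<Rightarrow> 'a::comm_monoid_add set) \<Rightarrow> 'a \<Rightarrow> (int \<Rightarrow>\<^sub>0 'a) \<Rightarrow> bool" where
  "graded_components G x c \<longleftrightarrow>
    (\<forall>d. Poly_Mapping.lookup c d \<in> G d) \<and> x = (\<Sum>d\<in>Poly_Mapping.keys c. Poly_Mapping.lookup c d)"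

lemma graded_components_tensor_grading_iff:
  "graded_components (tensor_grading G) f c \<longleftrightarrow>
    (\<forall>w. graded_components G (Poly_Mapping.lookup f w)
      (Poly_Mapping.map (\<lambda>v. Poly_Mapping.lookup v w) c))"
proof -
  have lookup_slice: "Poly_Mapping.lookup (Poly_Mapping.map (\<lambda>v. Poly_Mapping.lookup v w) c) d =
      Poly_Mapping.lookup (Poly_Mapping.lookup c d) w" for w d
    by (simp add: lookup_map)
  have sum_slice: "(\<Sum>d\<in>Poly_Mapping.keys (Poly_Mapping.map (\<lambda>v. Poly_Mapping.lookup v w) c).
      Poly_Mapping.lookup (Poly_Mapping.lookup c d) w) =
    (\<Sum>d\<in>Poly_Mapping.keys c. Poly_Mapping.lookup (Poly_Mapping.lookup c d) w)" for w
    by (rule sum.mono_neutral_left) (auto simp: in_keys_iff lookup_slice)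
  show ?thesis
    unfolding graded_components_def tensor_grading_def poly_mapping_eq_iff[of f] fun_eq_iff
      lookup_sum lookup_slice sum_slice
    by auto
qed

lemma ex1_graded_components_tensor_grading:
  assumes zero: "\<forall>d. 0 \<in> G d" and unique: "\<forall>x. \<exists>!c. graded_components G x c"
  shows "\<exists>!c. graded_components (tensor_grading G) f c"
proof -
  define dec where "dec x = (THE c. graded_components G x c)" for x
  have dec: "graded_components G x c \<longleftrightarrow> c = dec x" for x c
    unfolding dec_def using unique by (metis theI')
  have "dec 0 = 0"
    using dec[of 0 0] zero by (simp add: graded_components_def)
  define c where
    "c = (\<Sum>w\<in>Poly_Mapping.keys f. Poly_Mapping.map (Poly_Mapping.single w) (dec (Poly_Mapping.lookup f w)))"
  have slice_c: "Poly_Mapping.map (\<lambda>v. Poly_Mapping.lookup v w) c = dec (Poly_Mapping.lookup f w)" for w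
  proof (rule poly_mapping_eqI)
    fix d
    have "Poly_Mapping.lookup (Poly_Mapping.map (\<lambda>v. Poly_Mapping.lookup v w) c) d =
        (\<Sum>w'\<in>Poly_Mapping.keys f. Poly_Mapping.lookup (dec (Poly_Mapping.lookup f w')) d when w' = w)"
      by (simp add: c_def lookup_map lookup_sum lookup_single)
    also have "\<dots> = Poly_Mapping.lookup (dec (Poly_Mapping.lookup f w)) d"
      using \<open>dec 0 = 0\<close> by (cases "w \<in> Poly_Mapping.keys f") (simp_all add: when_def in_keys_iff)
    finally show "Poly_Mapping.lookup (Poly_Mapping.map (\<lambda>v. Poly_Mapping.lookup v w) c) d =
        Poly_Mapping.lookup (dec (Poly_Mapping.lookup f w)) d" .
  qed
  then have c: "graded_components (tensor_grading G) f c"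
    by (simp add: graded_components_tensor_grading_iff dec)
  have "c' = c" if "graded_components (tensor_grading G) f c'" for c'
  proof -
    have "Poly_Mapping.map (\<lambda>v. Poly_Mapping.lookup v w) c' =
        Poly_Mapping.map (\<lambda>v. Poly_Mapping.lookup v w) c" for w
      using that slice_c by (simp add: graded_components_tensor_grading_iff dec)
    then show "c' = c"
      by (metis (mono_tags) lookup_map lookup_zero poly_mapping_eqI)
  qed
  with c show ?thesis
    by blast
qed

lemma graded_module_tensor:
  fixes sc :: "'k::comm_ring_1 \<Rightarrow> 'a::ab_group_add \<Rightarrow> 'a"
  assumes "graded_module sc G"
  shows "graded_module (tensor_scale sc) (tensor_grading G :: int \<Rightarrow> ('w \<Rightarrow>\<^sub>0 'a) set)"
proof -
  have M: "module sc"
    and closed: "\<forall>d. 0 \<in> G d \<and> (\<forall>x\<in>G d. \<forall>y\<in>G d. x + y \<in> G d) \<and> (\<forall>c. \<forall>x\<in>G d. sc c x \<in> G d)"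
    and unique: "\<forall>x. \<exists>!c. graded_components G x c"
    using assms by (simp_all add: graded_module_def graded_components_def)
  have "\<exists>!c. graded_components (tensor_grading G) f c" for f :: "'w \<Rightarrow>\<^sub>0 'a"
    using closed unique by (intro ex1_graded_components_tensor_grading) simp_all
  moreover have "0 \<in> tensor_grading G d"
    "\<forall>x\<in>tensor_grading G d. \<forall>y\<in>tensor_grading G d. x + y \<in> tensor_grading G d"
    "\<forall>c. \<forall>x\<in>tensor_grading G d. tensor_scale sc c x \<in> tensor_grading G d" for d
    using closed by (auto simp: tensor_grading_def lookup_add lookup_tensor_scale[OF M])
  ultimately show ?thesis
    unfolding graded_module_def graded_components_def[symmetric]
    using module_tensor_scale[OF M] by blast
qed

definition dend_composite ::
  "(nat \<Rightarrow> nat \<Rightarrow> 'b list \<Rightarrow> 'b::comm_monoid_add) \<Rightarrow> nat \<Rightarrow> nat \<Rightarrow> nat \<Rightarrow> nat \<Rightarrow> 'b list \<Rightarrow> 'b" where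
  "dend_composite eta N r n i bs =
    eta (N + 1 - n) (R0 (N + 1 - n) n i r)
      (take (i - 1) bs @ [\<Sum>s\<in>Ri (N + 1 - n) n i r. eta n s (take n (drop (i - 1) bs))]
         @ drop (i - 1 + n) bs)"

definition family_composite ::
  "(nat \<Rightarrow> nat \<Rightarrow> 'w::semigroup_mult list \<Rightarrow> 'a list \<Rightarrow> 'a::comm_monoid_add)
    \<Rightarrow> nat \<Rightarrow> nat \<Rightarrow> nat \<Rightarrow> nat \<Rightarrow> 'w list \<Rightarrow> 'a list \<Rightarrow> 'a" where
  "family_composite eta N r n i als xs =
    eta (N + 1 - n) (R0 (N + 1 - n) n i r)
      (take (i - 1) als @ [sprod (take n (drop (i - 1) als))] @ drop (i - 1 + n) als)
      (take (i - 1) xs @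
         [\<Sum>s\<in>Ri (N + 1 - n) n i r. eta n s (take n (drop (i - 1) als)) (take n (drop (i - 1) xs))]
         @ drop (i - 1 + n) xs)"

lemma dend_algebraI:
  assumes "graded_module sc G"
    and "\<And>k r. 1 \<le> r \<Longrightarrow> r \<le> k \<Longrightarrow> multilinear sc sc k (eta k r)"
    and "\<And>k r bs ds. 1 \<le> r \<Longrightarrow> r \<le> k \<Longrightarrow> length bs = k \<Longrightarrow> length ds = k \<Longrightarrow>
      \<forall>j<k. bs ! j \<in> G (ds ! j) \<Longrightarrow> eta k r bs \<in> G (sum_list ds + int k - 2)"
    and "\<And>N r bs ds. 1 \<le> r \<Longrightarrow> r \<le> N \<Longrightarrow> length bs = N \<Longrightarrow> length ds = N \<Longrightarrow>
      \<forall>j<N. bs ! j \<in> G (ds ! j) \<Longrightarrow>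
      (\<Sum>n\<in>{1..N}. \<Sum>i\<in>{1..N + 1 - n}. sgnapp i n ds (dend_composite eta N r n i bs)) = 0"
  shows "dend_algebra sc G eta"
  using assms unfolding dend_algebra_def dend_composite_def by simp

lemma
  assumes "dend_family_algebra sc G eta"
  shows dend_family_algebra_graded: "graded_module sc G"
    and dend_family_algebra_multilinear:
      "\<And>k r als. 1 \<le> r \<Longrightarrow> r \<le> k \<Longrightarrow> length als = k \<Longrightarrow> multilinear sc sc k (eta k r als)"
    and dend_family_algebra_degree:
      "\<And>k r als xs ds. 1 \<le> r \<Longrightarrow> r \<le> k \<Longrightarrow> length als = k \<Longrightarrow> length xs = k \<Longrightarrow> length ds = k \<Longrightarrow>
        \<forall>j<k. xs ! j \<in> G (ds ! j) \<Longrightarrow> eta k r als xs \<in> G (sum_list ds + int k - 2)"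
  using assms unfolding dend_family_algebra_def by blast+

lemma dend_family_algebra_identity:
  assumes "dend_family_algebra sc G eta" and "1 \<le> r" "r \<le> N"
    and "length als = N" "length xs = N" "length ds = N" "\<forall>j<N. xs ! j \<in> G (ds ! j)"
  shows "(\<Sum>n\<in>{1..N}. \<Sum>i\<in>{1..N + 1 - n}. sgnapp i n ds (family_composite eta N r n i als xs)) = 0"
proof -
  have "1 \<le> N"
    using assms(2,3) by simp
  then show ?thesis
    using assms unfolding dend_family_algebra_def family_composite_def by blast
qed

lemma dend_composite_tensor_ops:
  assumes M: "module sc"
    and ml: "\<And>k r als. 1 \<le> r \<Longrightarrow> r \<le> k \<Longrightarrow> length als = k \<Longrightarrow> multilinear sc sc k (eta k r als)"
    and r: "1 \<le> r" "r \<le> N" and n: "1 \<le> n" "n \<le> N" and i: "1 \<le> i" "i \<le> N + 1 - n"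
    and len: "length bs = N"
  shows "dend_composite (tensor_ops eta) N r n i bs =
    (\<Sum>als\<in>listset (map Poly_Mapping.keys bs).
       Poly_Mapping.single (sprod als) (family_composite eta N r n i als (map2 Poly_Mapping.lookup bs als)))"
proof -
  define pre mid suf where "pre = take (i - 1) bs" and "mid = take n (drop (i - 1) bs)"
    and "suf = drop (i - 1 + n) bs"
  have lens: "length pre = i - 1" "length mid = n" "length suf = N + 1 - n - i"
    using n i len by (auto simp: pre_def mid_def suf_def)
  have bs: "bs = pre @ mid @ suf"
    unfolding pre_def mid_def suf_def by (metis append_take_drop_id drop_drop add.commute)
  have R0: "1 \<le> R0 (N + 1 - n) n i r" "R0 (N + 1 - n) n i r \<le> N + 1 - n"
    using r n i by (auto simp: R0_def)
  have "dend_composite (tensor_ops eta) N r n i bs =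
      tensor_ops eta (N + 1 - n) (R0 (N + 1 - n) n i r)
        (pre @ (\<Sum>s\<in>Ri (N + 1 - n) n i r. tensor_ops eta n s mid) # suf)"
    by (simp add: dend_composite_def pre_def mid_def suf_def)
  also have "\<dots> = (\<Sum>b\<in>listset (map Poly_Mapping.keys mid).
     \<Sum>a\<in>listset (map Poly_Mapping.keys pre). \<Sum>c\<in>listset (map Poly_Mapping.keys suf).
       Poly_Mapping.single (sprod (a @ b @ c))
         (eta (N + 1 - n) (R0 (N + 1 - n) n i r) (a @ sprod b # c)
           (map2 Poly_Mapping.lookup pre a @
              (\<Sum>s\<in>Ri (N + 1 - n) n i r. eta n s b (map2 Poly_Mapping.lookup mid b)) #
              map2 Poly_Mapping.lookup suf c)))"
    using lens n i by (intro tensor_ops_nested[OF M] ml R0) auto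
  also have "\<dots> = (\<Sum>als\<in>listset (map Poly_Mapping.keys bs).
       Poly_Mapping.single (sprod als) (family_composite eta N r n i als (map2 Poly_Mapping.lookup bs als)))"
    unfolding bs map_append sum_listset_append
    by (subst sum.swap, intro sum.cong refl)
      (simp add: family_composite_def lens length_listset)
  finally show ?thesis .
qed

lemma dend_identity_tensor_ops:
  assumes DF: "dend_family_algebra sc G eta"
    and r: "1 \<le> r" "r \<le> N" and len: "length bs = N" "length ds = N"
    and bs: "\<forall>j<N. bs ! j \<in> tensor_grading G (ds ! j)"
  shows "(\<Sum>n\<in>{1..N}. \<Sum>i\<in>{1..N + 1 - n}.
    sgnapp i n ds (dend_composite (tensor_ops eta) N r n i bs)) = 0"
proof -
  have M: "module sc"
    using dend_family_algebra_graded[OF DF] by (simp add: graded_module_def)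
  define L where "L = listset (map Poly_Mapping.keys bs)"
  have "(\<Sum>n\<in>{1..N}. \<Sum>i\<in>{1..N + 1 - n}.
      sgnapp i n ds (dend_composite (tensor_ops eta) N r n i bs)) =
      (\<Sum>n\<in>{1..N}. \<Sum>i\<in>{1..N + 1 - n}. \<Sum>als\<in>L. Poly_Mapping.single (sprod als)
         (sgnapp i n ds (family_composite eta N r n i als (map2 Poly_Mapping.lookup bs als))))"
    using r len unfolding L_def
    by (intro sum.cong refl)
      (simp add: dend_composite_tensor_ops[OF M dend_family_algebra_multilinear[OF DF]] sgnapp_sum_single)
  also have "\<dots> = (\<Sum>als\<in>L. Poly_Mapping.single (sprod als) (\<Sum>n\<in>{1..N}. \<Sum>i\<in>{1..N + 1 - n}.
         sgnapp i n ds (family_composite eta N r n i als (map2 Poly_Mapping.lookup bs als))))"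
    unfolding single_sum by (simp add: sum.swap[of _ L])
  also have "\<dots> = 0"
  proof (intro sum.neutral ballI)
    fix als assume "als \<in> L"
    then have "length als = N"
      using len by (simp add: L_def length_listset)
    moreover have "\<forall>j<N. map2 Poly_Mapping.lookup bs als ! j \<in> G (ds ! j)"
      using bs len \<open>length als = N\<close> by (simp add: tensor_grading_def)
    ultimately have "(\<Sum>n\<in>{1..N}. \<Sum>i\<in>{1..N + 1 - n}.
        sgnapp i n ds (family_composite eta N r n i als (map2 Poly_Mapping.lookup bs als))) = 0"
      using r len by (intro dend_family_algebra_identity[OF DF]) simp_all
    then show "Poly_Mapping.single (sprod als) (\<Sum>n\<in>{1..N}. \<Sum>i\<in>{1..N + 1 - n}.
        sgnapp i n ds (family_composite eta N r n i als (map2 Poly_Mapping.lookup bs als))) = 0"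
      by simp
  qed
  finally show ?thesis .
qed

theorem theorem5p9:
  fixes sc :: "'k::{comm_ring_1, ring_char_0} \<Rightarrow> 'a::ab_group_add \<Rightarrow> 'a"
    and G :: "int \<Rightarrow> 'a set"
    and eta :: "nat \<Rightarrow> nat \<Rightarrow> 'w::semigroup_mult list \<Rightarrow> 'a list \<Rightarrow> 'a"
  assumes "dend_family_algebra sc G eta"
  shows "dend_algebra (tensor_scale sc) (tensor_grading G) (tensor_ops eta)"
proof (rule dend_algebraI)
  have G: "graded_module sc G"
    using assms by (rule dend_family_algebra_graded)
  then show "graded_module (tensor_scale sc) (tensor_grading G :: int \<Rightarrow> ('w \<Rightarrow>\<^sub>0 'a) set)"
    by (rule graded_module_tensor)
  show "multilinear (tensor_scale sc) (tensor_scale sc) k (tensor_ops eta k r)"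
    if "1 \<le> r" "r \<le> k" for k r
    using G that by (intro multilinear_tensor_ops dend_family_algebra_multilinear[OF assms])
      (simp_all add: graded_module_def)
  show "tensor_ops eta k r bs \<in> tensor_grading G (sum_list ds + int k - 2)"
    if "1 \<le> r" "r \<le> k" "length bs = k" "length ds = k" "\<forall>j<k. bs ! j \<in> tensor_grading G (ds ! j)"
    for k r bs ds
    using G that by (intro tensor_ops_mem_tensor_grading dend_family_algebra_degree[OF assms]) simp_all
  show "(\<Sum>n\<in>{1..N}. \<Sum>i\<in>{1..N + 1 - n}.
      sgnapp i n ds (dend_composite (tensor_ops eta) N r n i bs)) = 0"
    if "1 \<le> r" "r \<le> N" "length bs = N" "length ds = N" "\<forall>j<N. bs ! j \<in> tensor_grading G (ds ! j)"
    for N r bs ds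
    using assms that by (rule dend_identity_tensor_ops)
qed

end
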